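(* Let $\mathcal S \subseteq U(4)$ be a set of two-qubit unitaries with the following property: for any $G_1,G_2,G_3 \in \mathcal S$ there exist $G_4,G_5,G_6\in\mathcal S$ with $$G_1^{(1)} G_2^{(2)} G_3^{(1)} = G_4^{(2)} G_5^{(1)} G_6^{(2)}$$ as operators on $(\mathbb C^2)^{\otimes 3}$, and conversely, for any $G_4,G_5,G_6\in\mathcal S$ there exist $G_1,G_2,G_3\in\mathcal S$ with the same equality. Then for any $A_1,\dots,A_6 \in \mathcal S$ there exist $B_1,\dots,B_6\in\mathcal S$ such that, as operators on $(\mathbb C^2)^{\otimes 4}$, $$A_6^{(2)}\,A_5^{(1)}A_4^{(3)}\,A_3^{(2)}\,A_2^{(1)}A_1^{(3)} \;=\; B_6^{(1)}B_5^{(3)}\,B_4^{(2)}\,B_3^{(1)}B_2^{(3)}\,B_1^{(2)}.$$ (In circuit language, read left to right in time: a four-qubit circuit whose four layers are {gates on qubits (1,2) and (3,4)}, {gate on (2,3)}, {gates on (1,2) and (3,4)}, {gate on (2,3)} equals a circuit with layers {gate on (2,3)}, {gates on (1,2) and (3,4)}, {gate on (2,3)}, {gates on (1,2) and (3,4)}, with gates from $\mathcal S$.)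
   Context: For a two-qubit unitary $G\in U(4)$ and a register of $n$ qubits, $G^{(i)}$ denotes $I_{2^{i-1}} \otimes G \otimes I_{2^{n-i-1}}$, i.e. $G$ acting on the adjacent qubits $i$ and $i+1$ and the identity elsewhere. Operator products act right to left (the rightmost factor is applied first). *)

theory Defs
  imports Complex_Main "Jordan_Normal_Form.Matrix"
begin

definition cadj :: "complex mat \<Rightarrow> complex mat" where
  "cadj A = mat (dim_col A) (dim_row A) (\<lambda>(i,j). cnj (A $$ (j,i)))"

definition U4 :: "complex mat set" where
  "U4 = {G. G \<in> carrier_mat 4 4 \<and> G * cadj G = 1\<^sub>m 4}"

text \<open>G^(i) on n qubits: I_{2^(i-1)} \<otimes> G \<otimes> I_{2^(n-i-1)} (Kronecker product,
  standard ordering: row index r = a * (4*m) + g * m + b with m = 2^(n-i-1)).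
  Qubits are numbered 1..n.\<close>
definition embed2 :: "nat \<Rightarrow> nat \<Rightarrow> complex mat \<Rightarrow> complex mat" where
  "embed2 n i G = (let m = 2 ^ (n - i - 1) in
     mat (2 ^ n) (2 ^ n) (\<lambda>(r, c).
       if r div (4 * m) = c div (4 * m) \<and> r mod m = c mod m
       then G $$ ((r div m) mod 4, (c div m) mod 4) else 0))"

end

theory Submission
  imports Defs
begin

(* Write a, b, c for gates on the qubit pairs (1,2), (2,3), (3,4) of four qubits. Gates a and c
   commute, and tensoring the three-qubit hypotheses with the identity on qubit 4, resp. qubit 1,
   turns them into the moves aba <-> bab and bcb <-> cbc with gates from S. Four moves and three
   commutations then rewrite the circuit:
     b a c b a c = b c (a b a) c  ->  b c (b a b) c = (b c b) a b c  ->  (c b c) a b c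
       = c b a (c b c)  ->  c b a (b c b) = c (b a b) c b  ->  c (a b a) c b = a c b a c b.
   Since both tensor embeddings are multiplicative, this argument runs in an arbitrary monoid. *)

lemma nat_eq_iff_div_mod_eq: "(a::nat) = b \<longleftrightarrow> a div q = b div q \<and> a mod q = b mod q"
  by (metis div_mult_mod_eq)

lemma mod_mult_div_eq: "(r::nat) mod (k * q) div k = r div k mod q"
  by (cases "k = 0") (simp_all add: mod_mult2_eq)

lemma mod_mult_eq_mod_mult_iff:
  "(r::nat) mod (k * m) = c mod (k * m) \<longleftrightarrow> r mod k = c mod k \<and> r div k mod m = c div k mod m"
  by (subst nat_eq_iff_div_mod_eq[where q = k]) (auto simp: mod_mult_div_eq mod_mod_cancel)

lemma div_eq_div_mult_iff:
  "(r::nat) div k = c div k \<longleftrightarrow> r div (k * q) = c div (k * q) \<and> r mod (k * q) div k = c mod (k * q) div k"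
  by (subst nat_eq_iff_div_mod_eq[where q = q]) (simp add: div_mult2_eq mod_mult_div_eq)

lemma mult_add_less_mult: "(x::nat) < n \<Longrightarrow> y < k \<Longrightarrow> x * k + y < n * k"
  using mult_le_mono1[of "Suc x" n k] by simp

lemma sum_lessThan_mult:
  fixes f :: "nat \<Rightarrow> 'a::comm_monoid_add"
  shows "(\<Sum>t<m * n. f t) = (\<Sum>x<m. \<Sum>y<n. f (x * n + y))"
proof -
  have "sum f {x * n..<x * n + n} = (\<Sum>y<n. f (x * n + y))" for x
    using sum.shift_bounds_nat_ivl[of f 0 "x * n" n] by (simp add: atLeast0LessThan add.commute)
  then show ?thesis using sum.nat_group[of f n m] by simp
qed

lemma index_mult_mat_sum:
  assumes "A \<in> carrier_mat m n" "B \<in> carrier_mat n p" "i < m" "j < p"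
  shows "(A * B) $$ (i, j) = (\<Sum>t<n. A $$ (i, t) * B $$ (t, j))"
  using assms by (simp add: scalar_prod_def atLeast0LessThan)

(* kron_id k n A = A \<otimes> I\<^sub>k and id_kron k n A = I\<^sub>k \<otimes> A, for an n \<times> n matrix A. *)
definition kron_id :: "nat \<Rightarrow> nat \<Rightarrow> 'a::zero mat \<Rightarrow> 'a mat" where
  "kron_id k n A = mat (n * k) (n * k) (\<lambda>(r, c). if r mod k = c mod k then A $$ (r div k, c div k) else 0)"

definition id_kron :: "nat \<Rightarrow> nat \<Rightarrow> 'a::zero mat \<Rightarrow> 'a mat" where
  "id_kron k n A = mat (k * n) (k * n) (\<lambda>(r, c). if r div n = c div n then A $$ (r mod n, c mod n) else 0)"

lemma kron_id_carrier [simp]: "kron_id k n A \<in> carrier_mat (n * k) (n * k)"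
  and dim_kron_id [simp]: "dim_row (kron_id k n A) = n * k" "dim_col (kron_id k n A) = n * k"
  by (simp_all add: kron_id_def)

lemma id_kron_carrier [simp]: "id_kron k n A \<in> carrier_mat (k * n) (k * n)"
  and dim_id_kron [simp]: "dim_row (id_kron k n A) = k * n" "dim_col (id_kron k n A) = k * n"
  by (simp_all add: id_kron_def)

lemma index_kron_id [simp]:
  "r < n * k \<Longrightarrow> c < n * k \<Longrightarrow>
    kron_id k n A $$ (r, c) = (if r mod k = c mod k then A $$ (r div k, c div k) else 0)"
  by (simp add: kron_id_def)

lemma index_id_kron [simp]:
  "r < k * n \<Longrightarrow> c < k * n \<Longrightarrow>
    id_kron k n A $$ (r, c) = (if r div n = c div n then A $$ (r mod n, c mod n) else 0)"
  by (simp add: id_kron_def)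

lemma kron_id_mult:
  fixes A B :: "'a::semiring_0 mat"
  assumes A: "A \<in> carrier_mat n n" and B: "B \<in> carrier_mat n n"
  shows "kron_id k n (A * B) = kron_id k n A * kron_id k n B"
proof (rule eq_matI)
  fix r c assume "r < dim_row (kron_id k n A * kron_id k n B)" "c < dim_col (kron_id k n A * kron_id k n B)"
  then have r: "r < n * k" and c: "c < n * k" by simp_all
  then have "0 < k" by (cases "k = 0") simp_all
  then have rk: "r mod k < k" and "r div k < n" "c div k < n"
    using r c by (simp_all add: less_mult_imp_div_less)
  have "(kron_id k n A * kron_id k n B) $$ (r, c)
      = (\<Sum>t<n * k. kron_id k n A $$ (r, t) * kron_id k n B $$ (t, c))"
    by (rule index_mult_mat_sum) (use r c in simp_all)
  also have "\<dots> = (\<Sum>x<n. \<Sum>y<k. kron_id k n A $$ (r, x * k + y) * kron_id k n B $$ (x * k + y, c))"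
    by (rule sum_lessThan_mult)
  also have "\<dots> = (\<Sum>x<n. \<Sum>y<k. if y = r mod k then
      (if r mod k = c mod k then A $$ (r div k, x) * B $$ (x, c div k) else 0) else 0)"
  proof (intro sum.cong refl)
    fix x y assume "x \<in> {..<n}" "y \<in> {..<k}"
    then have "x * k + y < n * k" "(x * k + y) mod k = y" "(x * k + y) div k = x"
      by (simp_all add: mult_add_less_mult)
    then show "kron_id k n A $$ (r, x * k + y) * kron_id k n B $$ (x * k + y, c) =
        (if y = r mod k then (if r mod k = c mod k then A $$ (r div k, x) * B $$ (x, c div k) else 0) else 0)"
      using r c by auto
  qed
  also have "\<dots> = kron_id k n (A * B) $$ (r, c)"
    using r c rk A B \<open>r div k < n\<close> \<open>c div k < n\<close> by (simp add: scalar_prod_def atLeast0LessThan sum.neutral)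
  finally show "kron_id k n (A * B) $$ (r, c) = (kron_id k n A * kron_id k n B) $$ (r, c)" ..
qed simp_all

lemma id_kron_mult:
  fixes A B :: "'a::semiring_0 mat"
  assumes A: "A \<in> carrier_mat n n" and B: "B \<in> carrier_mat n n"
  shows "id_kron k n (A * B) = id_kron k n A * id_kron k n B"
proof (rule eq_matI)
  fix r c assume "r < dim_row (id_kron k n A * id_kron k n B)" "c < dim_col (id_kron k n A * id_kron k n B)"
  then have r: "r < k * n" and c: "c < k * n" by simp_all
  then have "0 < n" by (cases "n = 0") simp_all
  then have rn: "r div n < k" and "r mod n < n" "c mod n < n"
    using r c by (simp_all add: less_mult_imp_div_less mult.commute)
  have "(id_kron k n A * id_kron k n B) $$ (r, c)
      = (\<Sum>t<k * n. id_kron k n A $$ (r, t) * id_kron k n B $$ (t, c))"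
    by (rule index_mult_mat_sum) (use r c in simp_all)
  also have "\<dots> = (\<Sum>x<k. \<Sum>y<n. id_kron k n A $$ (r, x * n + y) * id_kron k n B $$ (x * n + y, c))"
    by (rule sum_lessThan_mult)
  also have "\<dots> = (\<Sum>x<k. \<Sum>y<n. if x = r div n then
      (if r div n = c div n then A $$ (r mod n, y) * B $$ (y, c mod n) else 0) else 0)"
  proof (intro sum.cong refl)
    fix x y assume "x \<in> {..<k}" "y \<in> {..<n}"
    then have "x * n + y < k * n" "(x * n + y) mod n = y" "(x * n + y) div n = x"
      by (simp_all add: mult_add_less_mult)
    then show "id_kron k n A $$ (r, x * n + y) * id_kron k n B $$ (x * n + y, c) =
        (if x = r div n then (if r div n = c div n then A $$ (r mod n, y) * B $$ (y, c mod n) else 0) else 0)"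
      using r c by auto
  qed
  also have "\<dots> = id_kron k n (A * B) $$ (r, c)"
    using r c rn A B \<open>r mod n < n\<close> \<open>c mod n < n\<close> by (subst sum.swap) (simp add: scalar_prod_def atLeast0LessThan)
  finally show "id_kron k n (A * B) $$ (r, c) = (id_kron k n A * id_kron k n B) $$ (r, c)" ..
qed simp_all

lemma kron_id_hom: "kron_id k n \<in> hom (ring_mat TYPE('a::semiring_1) n b) (ring_mat TYPE('a) (n * k) b')"
  by (auto simp: hom_def ring_mat_simps kron_id_mult)

lemma id_kron_hom: "id_kron k n \<in> hom (ring_mat TYPE('a::semiring_1) n b) (ring_mat TYPE('a) (k * n) b')"
  by (auto simp: hom_def ring_mat_simps id_kron_mult)

lemma kron_id_id_kron_commute:
  fixes A B :: "'a::comm_semiring_0 mat"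
  shows "kron_id k n A * id_kron n k B = id_kron n k B * kron_id k n A"
proof (rule eq_matI)
  fix r c assume "r < dim_row (id_kron n k B * kron_id k n A)" "c < dim_col (id_kron n k B * kron_id k n A)"
  then have r: "r < n * k" and c: "c < n * k" by simp_all
  then have k: "0 < k" by (cases "k = 0") simp_all
  then have "r mod k < k" "c mod k < k" "r div k < n" "c div k < n"
    using r c by (simp_all add: less_mult_imp_div_less)
  then have t_lt: "c div k * k + r mod k < n * k" "r div k * k + c mod k < n * k"
    by (simp_all add: mult_add_less_mult)
  have t_iff: "t = x * k + y \<longleftrightarrow> t div k = x \<and> t mod k = y" if "y < k" for t x y
    using that div_mult_mod_eq[of t k] by auto
  have "(kron_id k n A * id_kron n k B) $$ (r, c) = (\<Sum>t<n * k. kron_id k n A $$ (r, t) * id_kron n k B $$ (t, c))"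
    by (rule index_mult_mat_sum) (use r c in simp_all)
  also have "\<dots> = (\<Sum>t<n * k. if t = c div k * k + r mod k then A $$ (r div k, c div k) * B $$ (r mod k, c mod k) else 0)"
    using r c t_iff[OF \<open>r mod k < k\<close>] by (intro sum.cong refl) auto
  also have "\<dots> = (\<Sum>t<n * k. if t = r div k * k + c mod k then B $$ (r mod k, c mod k) * A $$ (r div k, c div k) else 0)"
    using t_lt by (simp add: mult.commute)
  also have "\<dots> = (\<Sum>t<n * k. id_kron n k B $$ (r, t) * kron_id k n A $$ (t, c))"
    using r c t_iff[OF \<open>c mod k < k\<close>] by (intro sum.cong refl) auto
  also have "\<dots> = (id_kron n k B * kron_id k n A) $$ (r, c)"
    by (rule index_mult_mat_sum[symmetric]) (use r c in simp_all)
  finally show "(kron_id k n A * id_kron n k B) $$ (r, c) = (id_kron n k B * kron_id k n A) $$ (r, c)" .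
qed simp_all

lemma embed2_carrier [simp]: "embed2 n i G \<in> carrier_mat (2 ^ n) (2 ^ n)"
  and dim_embed2 [simp]: "dim_row (embed2 n i G) = 2 ^ n" "dim_col (embed2 n i G) = 2 ^ n"
  by (simp_all add: embed2_def Let_def)

lemma index_embed2:
  assumes "r < 2 ^ n" "c < 2 ^ n" "2 ^ (n - i - 1) = m"
  shows "embed2 n i G $$ (r, c) =
    (if r div (4 * m) = c div (4 * m) \<and> r mod m = c mod m then G $$ (r div m mod 4, c div m mod 4) else 0)"
  using assms by (simp add: embed2_def Let_def)

lemma embed2_Suc_kron_id:
  assumes "i < n"
  shows "embed2 (Suc n) i G = kron_id 2 (2 ^ n) (embed2 n i G)"
proof (rule eq_matI)
  define m where "m = (2::nat) ^ (n - i - 1)"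
  have m2: "(2::nat) ^ (Suc n - i - 1) = 2 * m"
    using assms by (simp add: m_def Suc_diff_Suc flip: power_Suc)
  have div_m: "x div (8 * m) = x div 2 div (4 * m)" "x div (2 * m) = x div 2 div m" for x :: nat
    using div_mult2_eq[of x 2 "4 * m"] div_mult2_eq[of x 2 m] by simp_all
  fix r c assume "r < dim_row (kron_id 2 (2 ^ n) (embed2 n i G))" "c < dim_col (kron_id 2 (2 ^ n) (embed2 n i G))"
  then have r: "r < 2 ^ n * 2" and c: "c < 2 ^ n * 2" by simp_all
  then have "r div 2 < 2 ^ n" "c div 2 < 2 ^ n" by (simp_all add: less_mult_imp_div_less)
  then have "kron_id 2 (2 ^ n) (embed2 n i G) $$ (r, c) = (if r mod 2 = c mod 2 then
      (if r div 2 div (4 * m) = c div 2 div (4 * m) \<and> r div 2 mod m = c div 2 mod m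
       then G $$ (r div 2 div m mod 4, c div 2 div m mod 4) else 0) else 0)"
    using r c by (simp add: index_embed2[OF _ _ m_def[symmetric]])
  also have "\<dots> = embed2 (Suc n) i G $$ (r, c)"
    using r c by (auto simp: index_embed2[OF _ _ m2] div_m mod_mult_eq_mod_mult_iff)
  finally show "embed2 (Suc n) i G $$ (r, c) = kron_id 2 (2 ^ n) (embed2 n i G) $$ (r, c)" ..
qed simp_all

lemma embed2_Suc_id_kron:
  assumes "0 < i" "i < n"
  shows "embed2 (Suc n) (Suc i) G = id_kron 2 (2 ^ n) (embed2 n i G)"
proof (rule eq_matI)
  define m where "m = (2::nat) ^ (n - i - 1)"
  define q where "q = (2::nat) ^ (i - 1)"
  have "n = (n - i - 1) + 2 + (i - 1)" using assms by simp
  then have N: "(2::nat) ^ n = 4 * m * q"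
    by (metis m_def q_def power_add power2_eq_square mult.commute numeral_Bit0 mult_2)
  have m_Suc: "(2::nat) ^ (Suc n - Suc i - 1) = m" by (simp add: m_def)
  have mod_N: "x mod (4 * m * q) mod m = x mod m" "x mod (4 * m * q) div m mod 4 = x div m mod 4" for x
    using mod_mult_div_eq[of x m "4 * q"] by (simp_all add: mod_mod_cancel mult.commute mult.left_commute)
  fix r c assume "r < dim_row (id_kron 2 (2 ^ n) (embed2 n i G))" "c < dim_col (id_kron 2 (2 ^ n) (embed2 n i G))"
  then have r: "r < 2 * 2 ^ n" and c: "c < 2 * 2 ^ n" by simp_all
  have "id_kron 2 (2 ^ n) (embed2 n i G) $$ (r, c) =
      (if r div 2 ^ n = c div 2 ^ n then embed2 n i G $$ (r mod 2 ^ n, c mod 2 ^ n) else 0)"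
    using r c by simp
  also have "\<dots> = (if r div 2 ^ n = c div 2 ^ n then
      (if r mod 2 ^ n div (4 * m) = c mod 2 ^ n div (4 * m) \<and> r mod m = c mod m
       then G $$ (r div m mod 4, c div m mod 4) else 0) else 0)"
    by (simp add: index_embed2[OF _ _ m_def[symmetric]] mod_N[folded N])
  also have "\<dots> = (if r div (4 * m) = c div (4 * m) \<and> r mod m = c mod m
       then G $$ (r div m mod 4, c div m mod 4) else 0)"
    using div_eq_div_mult_iff[of r "4 * m" c q, folded N] by auto
  also have "\<dots> = embed2 (Suc n) (Suc i) G $$ (r, c)"
    using r c by (simp add: index_embed2[OF _ _ m_Suc])
  finally show "embed2 (Suc n) (Suc i) G $$ (r, c) = id_kron 2 (2 ^ n) (embed2 n i G) $$ (r, c)" ..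
qed simp_all

lemma embed2_4_1_eq_kron_id: "embed2 4 1 G = kron_id 4 4 G"
proof (rule eq_matI)
  fix r c assume "r < dim_row (kron_id 4 4 G)" "c < dim_col (kron_id 4 4 G)"
  then show "embed2 4 1 G $$ (r, c) = kron_id 4 4 G $$ (r, c)"
    by (simp add: index_embed2[where m = 4])
qed simp_all

lemma embed2_4_3_eq_id_kron: "embed2 4 3 G = id_kron 4 4 G"
proof (rule eq_matI)
  fix r c assume "r < dim_row (id_kron 4 4 G)" "c < dim_col (id_kron 4 4 G)"
  then show "embed2 4 3 G $$ (r, c) = id_kron 4 4 G $$ (r, c)"
    by (simp add: index_embed2[where m = 1])
qed simp_all

lemma embed2_4_1_3_commute: "embed2 4 1 G * embed2 4 3 H = embed2 4 3 H * embed2 4 1 G"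
  unfolding embed2_4_1_eq_kron_id embed2_4_3_eq_id_kron by (rule kron_id_id_kron_commute)

definition braid_closed :: "('a, 'b) monoid_scheme \<Rightarrow> ('g \<Rightarrow> 'a) \<Rightarrow> ('g \<Rightarrow> 'a) \<Rightarrow> 'g set \<Rightarrow> bool" where
  "braid_closed M f g S \<longleftrightarrow>
     (\<lambda>(x, y, z). f x \<otimes>\<^bsub>M\<^esub> g y \<otimes>\<^bsub>M\<^esub> f z) ` (S \<times> S \<times> S) =
     (\<lambda>(x, y, z). g x \<otimes>\<^bsub>M\<^esub> f y \<otimes>\<^bsub>M\<^esub> g z) ` (S \<times> S \<times> S)"

lemma braid_closed_hom:
  assumes M: "monoid M" and h: "h \<in> hom M N"
    and f: "f ` S \<subseteq> carrier M" and g: "g ` S \<subseteq> carrier M"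
    and fg: "braid_closed M f g S"
  shows "braid_closed N (h \<circ> f) (h \<circ> g) S"
proof -
  have image_triples: "h ` (\<lambda>(x, y, z). p x \<otimes>\<^bsub>M\<^esub> q y \<otimes>\<^bsub>M\<^esub> p z) ` (S \<times> S \<times> S) =
      (\<lambda>(x, y, z). h (p x) \<otimes>\<^bsub>N\<^esub> h (q y) \<otimes>\<^bsub>N\<^esub> h (p z)) ` (S \<times> S \<times> S)"
    if "p ` S \<subseteq> carrier M" "q ` S \<subseteq> carrier M" for p q
    unfolding image_image using that h
    by (intro image_cong refl) (auto simp: image_subset_iff hom_mult monoid.m_closed[OF M])
  show ?thesis
    using fg image_triples[OF f g] image_triples[OF g f] unfolding braid_closed_def comp_def by simp
qed

lemma braid_closed_iff:
  "braid_closed M f g S \<longleftrightarrow>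
     (\<forall>x\<in>S. \<forall>y\<in>S. \<forall>z\<in>S. \<exists>u\<in>S. \<exists>v\<in>S. \<exists>w\<in>S.
        f x \<otimes>\<^bsub>M\<^esub> g y \<otimes>\<^bsub>M\<^esub> f z = g u \<otimes>\<^bsub>M\<^esub> f v \<otimes>\<^bsub>M\<^esub> g w) \<and>
     (\<forall>u\<in>S. \<forall>v\<in>S. \<forall>w\<in>S. \<exists>x\<in>S. \<exists>y\<in>S. \<exists>z\<in>S.
        f x \<otimes>\<^bsub>M\<^esub> g y \<otimes>\<^bsub>M\<^esub> f z = g u \<otimes>\<^bsub>M\<^esub> f v \<otimes>\<^bsub>M\<^esub> g w)"
  unfolding braid_closed_def set_eq_subset image_subset_iff by (auto simp: image_iff) (metis)+

lemma (in monoid) braid_closed_brickwork: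
  assumes carr: "a ` S \<subseteq> carrier G" "b ` S \<subseteq> carrier G" "c ` S \<subseteq> carrier G"
    and ac: "\<And>x y. x \<in> S \<Longrightarrow> y \<in> S \<Longrightarrow> a x \<otimes> c y = c y \<otimes> a x"
    and ab: "braid_closed G a b S" and bc: "braid_closed G b c S"
    and A: "A1 \<in> S" "A2 \<in> S" "A3 \<in> S" "A4 \<in> S" "A5 \<in> S" "A6 \<in> S"
  shows "\<exists>B1\<in>S. \<exists>B2\<in>S. \<exists>B3\<in>S. \<exists>B4\<in>S. \<exists>B5\<in>S. \<exists>B6\<in>S.
     b A6 \<otimes> a A5 \<otimes> c A4 \<otimes> b A3 \<otimes> a A2 \<otimes> c A1 = a B6 \<otimes> c B5 \<otimes> b B4 \<otimes> a B3 \<otimes> c B2 \<otimes> b B1"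
proof -
  have [simp]: "a x \<in> carrier G" "b x \<in> carrier G" "c x \<in> carrier G" if "x \<in> S" for x
    using carr that by auto
  have ac_tail: "a x \<otimes> (c y \<otimes> t) = c y \<otimes> (a x \<otimes> t)" if "x \<in> S" "y \<in> S" "t \<in> carrier G" for x y t
    using that by (simp add: ac flip: m_assoc)
  have tail: "p \<otimes> (q \<otimes> (s \<otimes> t)) = p' \<otimes> (q' \<otimes> (s' \<otimes> t))"
    if "p \<otimes> q \<otimes> s = p' \<otimes> q' \<otimes> s'" "t \<in> carrier G"
      "p \<in> carrier G" "q \<in> carrier G" "s \<in> carrier G" "p' \<in> carrier G" "q' \<in> carrier G" "s' \<in> carrier G"
    for p q s p' q' s' t
    using that by (simp flip: m_assoc)
  obtain C4 C5 C6 where C: "C4 \<in> S" "C5 \<in> S" "C6 \<in> S"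
    and C_eq: "a A5 \<otimes> b A3 \<otimes> a A2 = b C4 \<otimes> a C5 \<otimes> b C6"
    using ab A unfolding braid_closed_iff by blast
  obtain D4 D5 D6 where D: "D4 \<in> S" "D5 \<in> S" "D6 \<in> S"
    and D_eq: "b A6 \<otimes> c A4 \<otimes> b C4 = c D4 \<otimes> b D5 \<otimes> c D6"
    using bc A C unfolding braid_closed_iff by blast
  obtain E1 E2 E3 where E: "E1 \<in> S" "E2 \<in> S" "E3 \<in> S"
    and E_eq: "b E1 \<otimes> c E2 \<otimes> b E3 = c D6 \<otimes> b C6 \<otimes> c A1"
    using bc A C D unfolding braid_closed_iff by blast
  obtain F1 F2 F3 where F: "F1 \<in> S" "F2 \<in> S" "F3 \<in> S"
    and F_eq: "a F1 \<otimes> b F2 \<otimes> a F3 = b D5 \<otimes> a C5 \<otimes> b E1"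
    using ab C D E unfolding braid_closed_iff by blast
  have "b A6 \<otimes> a A5 \<otimes> c A4 \<otimes> b A3 \<otimes> a A2 \<otimes> c A1
      = b A6 \<otimes> (c A4 \<otimes> (a A5 \<otimes> (b A3 \<otimes> (a A2 \<otimes> c A1))))"
    using A by (simp add: m_assoc ac_tail)
  also have "\<dots> = b A6 \<otimes> (c A4 \<otimes> (b C4 \<otimes> (a C5 \<otimes> (b C6 \<otimes> c A1))))"
    using A C by (simp add: tail[OF C_eq])
  also have "\<dots> = c D4 \<otimes> (b D5 \<otimes> (c D6 \<otimes> (a C5 \<otimes> (b C6 \<otimes> c A1))))"
    using A C D by (simp add: tail[OF D_eq])
  also have "\<dots> = c D4 \<otimes> (b D5 \<otimes> (a C5 \<otimes> (c D6 \<otimes> (b C6 \<otimes> c A1))))"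
    using A C D by (simp add: ac_tail)
  also have "\<dots> = c D4 \<otimes> (b D5 \<otimes> (a C5 \<otimes> (b E1 \<otimes> (c E2 \<otimes> b E3))))"
    using A C D E E_eq by (simp add: m_assoc)
  also have "\<dots> = c D4 \<otimes> (a F1 \<otimes> (b F2 \<otimes> (a F3 \<otimes> (c E2 \<otimes> b E3))))"
    using C D E F by (simp add: tail[OF F_eq[symmetric]])
  also have "\<dots> = a F1 \<otimes> c D4 \<otimes> b F2 \<otimes> a F3 \<otimes> c E2 \<otimes> b E3"
    using D E F by (simp add: m_assoc ac_tail)
  finally show ?thesis using D E F by blast
qed

theorem mainTheorem2:
  fixes S :: "complex mat set"
  assumes SU: "S \<subseteq> U4"
    and fwd: "\<forall>G1\<in>S. \<forall>G2\<in>S. \<forall>G3\<in>S. \<exists>G4\<in>S. \<exists>G5\<in>S. \<exists>G6\<in>S.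
       embed2 3 1 G1 * embed2 3 2 G2 * embed2 3 1 G3 = embed2 3 2 G4 * embed2 3 1 G5 * embed2 3 2 G6"
    and bwd: "\<forall>G4\<in>S. \<forall>G5\<in>S. \<forall>G6\<in>S. \<exists>G1\<in>S. \<exists>G2\<in>S. \<exists>G3\<in>S.
       embed2 3 1 G1 * embed2 3 2 G2 * embed2 3 1 G3 = embed2 3 2 G4 * embed2 3 1 G5 * embed2 3 2 G6"
    and A: "A1 \<in> S" "A2 \<in> S" "A3 \<in> S" "A4 \<in> S" "A5 \<in> S" "A6 \<in> S"
  shows "\<exists>B1\<in>S. \<exists>B2\<in>S. \<exists>B3\<in>S. \<exists>B4\<in>S. \<exists>B5\<in>S. \<exists>B6\<in>S.
     embed2 4 2 A6 * embed2 4 1 A5 * embed2 4 3 A4 * embed2 4 2 A3 * embed2 4 1 A2 * embed2 4 3 A1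
   = embed2 4 1 B6 * embed2 4 3 B5 * embed2 4 2 B4 * embed2 4 1 B3 * embed2 4 3 B2 * embed2 4 2 B1"
proof -
  let ?M8 = "ring_mat TYPE(complex) 8 ()" and ?M16 = "ring_mat TYPE(complex) 16 ()"
  have M8: "monoid ?M8" and M16: "monoid ?M16" by (rule semiring.axioms(2)[OF semiring_mat])+
  have carrier: "embed2 3 i ` S \<subseteq> carrier ?M8" "embed2 4 i ` S \<subseteq> carrier ?M16" for i
    by (auto simp: ring_mat_simps)
  have hom: "kron_id 2 8 \<in> hom ?M8 ?M16" "id_kron 2 8 \<in> hom ?M8 ?M16"
    using kron_id_hom[of 2 8] id_kron_hom[of 2 8] by simp_all
  have lift: "kron_id 2 8 \<circ> embed2 3 1 = embed2 4 1" "kron_id 2 8 \<circ> embed2 3 2 = embed2 4 2"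
    "id_kron 2 8 \<circ> embed2 3 1 = embed2 4 2" "id_kron 2 8 \<circ> embed2 3 2 = embed2 4 3"
    using embed2_Suc_kron_id[of 1 3, symmetric] embed2_Suc_kron_id[of 2 3, symmetric]
      embed2_Suc_id_kron[of 1 3, symmetric] embed2_Suc_id_kron[of 2 3, symmetric]
    by (simp_all add: fun_eq_iff eval_nat_numeral)
  have "braid_closed ?M8 (embed2 3 1) (embed2 3 2) S"
    using fwd bwd by (simp add: braid_closed_iff ring_mat_simps)
  from braid_closed_hom[OF M8 hom(1) carrier(1) carrier(1) this] braid_closed_hom[OF M8 hom(2) carrier(1) carrier(1) this]
  have ab: "braid_closed ?M16 (embed2 4 1) (embed2 4 2) S" and bc: "braid_closed ?M16 (embed2 4 2) (embed2 4 3) S"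
    unfolding lift .
  have ac: "embed2 4 1 x \<otimes>\<^bsub>?M16\<^esub> embed2 4 3 y = embed2 4 3 y \<otimes>\<^bsub>?M16\<^esub> embed2 4 1 x" for x y
    unfolding ring_mat_simps by (rule embed2_4_1_3_commute)
  show ?thesis
    using monoid.braid_closed_brickwork[OF M16 carrier(2) carrier(2) carrier(2) ac ab bc A]
    unfolding ring_mat_simps .
qed

end
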